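(* For all integers $m\geq2$, $P_{m,m-1}(q)=P_{m,m-2}(q)$ and $Q_{m,m-1}(q)=Q_{m,m-2}(q)$.
   Context: $[k]=\frac{1-q^k}{1-q}$, $[k]!=\prod_{i=1}^k[i]$, $[0]!=1$. Let $S_{m,n}(q)=\sum_{k=1}^n\frac{[2k]}{[2]}[k]^{m-1}q^{\frac{m+1}{2}(n-k)}$. The polynomials $P_{m,j},Q_{m,j}\in\mathbb{Z}[q]$ are those (shown to exist by Guo and Zeng, and uniquely determined) such that for all $n\ge1$: $S_{2m+1,n}(q)=\sum_{k=0}^m(-q^n)^{m-k}\frac{[k]!}{[m+1]!}P_{m,m-k}(q)\frac{([n][n+1])^{k+1}}{[2]}$ for $m\ge0$, and $S_{2m,n}(q)=(1-q^{n+\frac12})\sum_{k=0}^m(-q^n)^{m-k}\frac{(1-q^{\frac12})^{m-k}Q_{m,m-k}(q^{\frac12})}{\prod_{i=0}^{m-k}(1-q^{m-i+\frac12})}\frac{([n][n+1])^k}{[2]}$ for $m\ge1$. *)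

theory Defs
  imports Complex_Main "HOL-Computational_Algebra.Polynomial"
begin

definition qint :: "nat \<Rightarrow> real \<Rightarrow> real" where
  "qint k q = (1 - q ^ k) / (1 - q)"

definition qfact :: "nat \<Rightarrow> real \<Rightarrow> real" where
  "qfact k q = (\<Prod>i=1..k. qint i q)"

definition Ssum :: "nat \<Rightarrow> nat \<Rightarrow> real \<Rightarrow> real" where
  "Ssum m n q = (\<Sum>k=1..n. qint (2*k) q / qint 2 q * qint k q ^ (m - 1)
                   * q powr ((real m + 1) / 2 * (real n - real k)))"

definition evalp :: "int poly \<Rightarrow> real \<Rightarrow> real" where
  "evalp p x = poly (map_poly of_int p) x"

text \<open>The defining identity of the family P_{m,0..m} (odd case), for all n \<ge> 1,
  as an identity of functions of q on (0,1) (equivalently, of rational functions in q).\<close>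

definition P_family :: "nat \<Rightarrow> (nat \<Rightarrow> int poly) \<Rightarrow> bool" where
  "P_family m P \<longleftrightarrow> (\<forall>n\<ge>1. \<forall>q::real. 0 < q \<and> q < 1 \<longrightarrow>
     Ssum (2*m+1) n q =
       (\<Sum>k=0..m. (- (q ^ n)) ^ (m - k) * qfact k q / qfact (m+1) q * evalp (P (m - k)) q
          * (qint n q * qint (n+1) q) ^ (k+1) / qint 2 q))"

definition Q_family :: "nat \<Rightarrow> (nat \<Rightarrow> int poly) \<Rightarrow> bool" where
  "Q_family m Q \<longleftrightarrow> (\<forall>n\<ge>1. \<forall>q::real. 0 < q \<and> q < 1 \<longrightarrow>
     Ssum (2*m) n q =
       (1 - q powr (real n + 1/2)) *
       (\<Sum>k=0..m. (- (q ^ n)) ^ (m - k) * (1 - q powr (1/2)) ^ (m - k)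
          * evalp (Q (m - k)) (q powr (1/2))
          / (\<Prod>i=0..m-k. (1 - q powr (real m - real i + 1/2)))
          * (qint n q * qint (n+1) q) ^ k / qint 2 q))"

definition Ppoly :: "nat \<Rightarrow> nat \<Rightarrow> int poly" where
  "Ppoly m j = (THE p. \<exists>P. P_family m P \<and> P j = p)"

definition Qpoly :: "nat \<Rightarrow> nat \<Rightarrow> int poly" where
  "Qpoly m j = (THE p. \<exists>Q. Q_family m Q \<and> Q j = p)"

end

(* Put x = q^n. The defining identity writes S_{M,n} as R(q^n) for a polynomial R, and
   S_{M,n+1} = q^((M+1)/2) S_{M,n} + [2n+2]/[2] [n+1]^(M-1). Both sides of the resulting relation are
   polynomial in x and agree for infinitely many x, so R(x) - q^((M+1)/2) R(x/q) equals
   (1-x^2)/(1-q^2) ((1-x)/(1-q))^(M-1) identically, which vanishes to order at least 4 at x = 1.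
   In the left side the k-th summand carries the factor (1-x)^k. Hence the coefficients of (1-x)^0 and
   (1-x)^2 at x = 1 vanish: the first kills the top coefficient, the second is a linear relation between the
   coefficients of P_{m,m-1} and P_{m,m-2}, which reduces to their equality. The Q-case is the same argument in
   the variable r = q^(1/2). *)

theory Submission
  imports Defs "HOL-Analysis.Weierstrass_Theorems"
begin

lemma real_polynomial_function_id: "real_polynomial_function (\<lambda>x. x)"
  using real_polynomial_function.intros(1)[OF bounded_linear_ident] .

(* Without the introduction rule for bounded linear maps, which unifies with every goal. *)
lemmas real_polynomial_function_intros =
  real_polynomial_function.intros(2-4) real_polynomial_function_id real_polynomial_function_diff real_polynomial_function_minus
  real_polynomial_function_power real_polynomial_function_divide real_polynomial_function_sum finite_atLeastAtMost

lemma real_polynomial_function_eqI: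
  fixes f g :: "real \<Rightarrow> real"
  assumes "real_polynomial_function f" "real_polynomial_function g"
    and "infinite S" "\<And>x. x \<in> S \<Longrightarrow> f x = g x"
  shows "f y = g y"
proof -
  obtain a n where a: "\<And>x. f x - g x = (\<Sum>i\<le>n. a i * x ^ i)"
    using real_polynomial_function_diff[OF assms(1,2)] real_polynomial_function_iff_sum by metis
  have "S \<subseteq> {x. (\<Sum>i\<le>n. a i * x ^ i) = 0}"
    using assms(4) by (auto simp flip: a)
  then have "\<forall>i\<le>n. a i = 0"
    using assms(3) polyfun_finite_roots finite_subset by blast
  then show ?thesis using a[of y] by simp
qed

lemma real_polynomial_function_eq_at:
  fixes f g :: "real \<Rightarrow> real"
  assumes "real_polynomial_function f" "real_polynomial_function g"
    and "\<And>x. x \<noteq> a \<Longrightarrow> f x = g x"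
  shows "f a = g a"
  using real_polynomial_function_eqI[OF assms(1,2), of "- {a}"] assms(3) infinite_UNIV_char_0
  by auto

lemma real_polynomial_function_rescale:
  fixes R :: "real \<Rightarrow> real"
  assumes "real_polynomial_function R"
  shows "real_polynomial_function (\<lambda>y. R (c * y))"
proof -
  have "real_polynomial_function (\<lambda>y::real. c * y)"
    by (intro real_polynomial_function_intros)
  then have "polynomial_function (\<lambda>y::real. c * y)"
    by (simp add: real_polynomial_function_eq)
  then show ?thesis
    using real_polynomial_function_compose[OF _ assms] by (simp add: o_def)
qed

lemma infinite_powers:
  fixes q :: real
  assumes "0 < q" "q \<noteq> 1"
  shows "infinite ((\<lambda>n. q ^ n) ` {1..})"
  using assms by (metis finite_imageD infinite_Ici inj_onI power_inject_exp')

lemma evalp_eqI: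
  assumes "\<And>x. 0 < x \<Longrightarrow> x < 1 \<Longrightarrow> evalp a x = evalp b x"
  shows "a = b"
proof -
  let ?d = "map_poly (of_int :: int \<Rightarrow> real) a - map_poly of_int b"
  have "{0<..<1} \<subseteq> {x. poly ?d x = 0}"
    using assms by (auto simp: evalp_def)
  then have "?d = 0"
    using poly_roots_finite finite_subset infinite_Ioo by (metis zero_less_one)
  then have "coeff (map_poly (of_int :: int \<Rightarrow> real) a) n = coeff (map_poly of_int b) n" for n
    by simp
  then show ?thesis
    by (simp add: poly_eq_iff coeff_map_poly)
qed

lemma qint_pos: "0 < q \<Longrightarrow> q < 1 \<Longrightarrow> 0 < k \<Longrightarrow> 0 < qint k (q::real)"
  unfolding qint_def by (simp add: power_less_one_iff)

lemma qfact_pos: "0 < q \<Longrightarrow> q < 1 \<Longrightarrow> 0 < qfact k (q::real)"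
  unfolding qfact_def by (rule prod_pos) (simp add: qint_pos)

lemma qint_mult_qint_Suc:
  "qint n q * qint (Suc n) q = (1 - q ^ n) * (1 - q * q ^ n) / (1 - q)\<^sup>2"
  by (simp add: qint_def power2_eq_square)

lemma Ssum_Suc:
  assumes "0 < q"
  shows "Ssum M (Suc n) q = q powr ((real M + 1) / 2) * Ssum M n q
     + qint (2 * Suc n) q / qint 2 q * qint (Suc n) q ^ (M - 1)"
proof -
  define f where "f k = qint (2 * k) q / qint 2 q * qint k q ^ (M - 1)" for k
  define a where "a = (real M + 1) / 2"
  have S: "Ssum M N q = (\<Sum>k=1..N. f k * q powr (a * (real N - real k)))" for N
    unfolding Ssum_def f_def a_def ..
  have "Ssum M (Suc n) q = (\<Sum>k=1..n. f k * q powr (a * (real (Suc n) - real k))) + f (Suc n)"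
    unfolding S using assms by simp
  also have "(\<Sum>k=1..n. f k * q powr (a * (real (Suc n) - real k))) = q powr a * Ssum M n q"
    unfolding S sum_distrib_left
    by (rule sum.cong) (simp_all add: algebra_simps flip: powr_add)
  finally show ?thesis unfolding f_def a_def by simp
qed

lemma Ssum_functional_equation:
  fixes q :: real and R :: "real \<Rightarrow> real"
  assumes q: "0 < q" "q < 1" and R: "real_polynomial_function R"
    and Ssum_R: "\<And>n. n \<ge> 1 \<Longrightarrow> Ssum M n q = R (q ^ n)"
  shows "R x - q powr ((real M + 1) / 2) * R (x / q)
    = (1 - x\<^sup>2) / (1 - q\<^sup>2) * ((1 - x) / (1 - q)) ^ (M - 1)"
proof -
  define c where "c = q powr ((real M + 1) / 2)"
  define g where "g x = (1 - x\<^sup>2) / (1 - q\<^sup>2) * ((1 - x) / (1 - q)) ^ (M - 1)" for x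
  have "R (q * y) = c * R y + g (q * y)" if y: "y \<in> (\<lambda>n. q ^ n) ` {1..}" for y
  proof -
    obtain n where n: "n \<ge> 1" "y = q ^ n" using y by auto
    have "(q ^ Suc n)\<^sup>2 = q ^ (2 * Suc n)"
      by (metis power_mult mult.commute)
    then have "g (q ^ Suc n) = qint (2 * Suc n) q / qint 2 q * qint (Suc n) q ^ (M - 1)"
      using q by (simp add: g_def qint_def)
    then show ?thesis
      using Ssum_Suc[OF q(1), of M n] Ssum_R[of n] Ssum_R[of "Suc n"] n by (simp add: c_def)
  qed
  moreover have "real_polynomial_function (\<lambda>y. c * R y + g (q * y))"
    unfolding g_def using R by (intro real_polynomial_function_intros)
  ultimately have "R (q * y) = c * R y + g (q * y)" for y
    using real_polynomial_function_eqI[of "\<lambda>y. R (q * y)" "\<lambda>y. c * R y + g (q * y)",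
        OF real_polynomial_function_rescale[OF R] _ infinite_powers] q by auto
  from this[of "x / q"] show ?thesis
    using q by (simp add: c_def g_def)
qed

(* At x = q^n one has (1-x)(1-qx) = (1-q)^2 [n][n+1] (qint_mult_qint_Suc), so the sums in the
   defining identities are qseries with coefficients rescaled by (1-q)^(2k). *)
definition qseries :: "real \<Rightarrow> nat \<Rightarrow> (nat \<Rightarrow> real) \<Rightarrow> real \<Rightarrow> real" where
  "qseries q m c x = (\<Sum>k=0..m. c k * (-x) ^ (m - k) * ((1 - x) * (1 - q * x)) ^ k)"

definition qkernel :: "real \<Rightarrow> real \<Rightarrow> nat \<Rightarrow> real \<Rightarrow> real" where
  "qkernel p q k x = (1 - p * x) * (1 - q * x) ^ k - (p - x) * (q - x) ^ k"

definition qdiff :: "real \<Rightarrow> real \<Rightarrow> nat \<Rightarrow> (nat \<Rightarrow> real) \<Rightarrow> real \<Rightarrow> real" where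
  "qdiff p q m c x = (\<Sum>k=0..m. c k * (-x) ^ (m - k) * (1 - x) ^ k * qkernel p q k x)"

definition qdiff_cofactor :: "real \<Rightarrow> real \<Rightarrow> nat \<Rightarrow> (nat \<Rightarrow> real) \<Rightarrow> real \<Rightarrow> real" where
  "qdiff_cofactor p q m c x = c 1 * (-x) ^ (m - 1) * (1 - p * q) * (1 + x)
      + (\<Sum>k=2..m. c k * (-x) ^ (m - k) * (1 - x) ^ (k - 2) * qkernel p q k x)"

lemma qseries_rescaled:
  fixes q :: real
  assumes "q \<noteq> 0"
  shows "q ^ m * qseries q m c (x / q) = (\<Sum>k=0..m. c k * (-x) ^ (m - k) * ((1 - x) * (q - x)) ^ k)"
  unfolding qseries_def sum_distrib_left
proof (rule sum.cong[OF refl])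
  fix k assume "k \<in> {0..m}"
  then have qm: "q ^ m = q ^ (m - k) * q ^ k"
    by (simp flip: power_add)
  define A where "A = (1 - x / q) * (1 - q * (x / q))"
  have "q ^ m * (c k * (- (x / q)) ^ (m - k) * A ^ k) = c k * (q * - (x / q)) ^ (m - k) * (q * A) ^ k"
    unfolding qm power_mult_distrib by (simp only: mult_ac)
  also have "\<dots> = c k * (- x) ^ (m - k) * ((1 - x) * (q - x)) ^ k"
  proof -
    have "q * - (x / q) = - x" "q * A = (1 - x) * (q - x)"
      using assms by (simp_all add: A_def field_simps)
    then show ?thesis by simp
  qed
  finally show "q ^ m * (c k * (- (x / q)) ^ (m - k) * A ^ k) = c k * (- x) ^ (m - k) * ((1 - x) * (q - x)) ^ k" .
qed

lemma qseries_difference: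
  fixes p q :: real
  assumes "q \<noteq> 0" and "\<mu> * a = q ^ m * ((p - x) * b)"
  shows "qseries q m c x * ((1 - p * x) * b) - \<mu> * (qseries q m c (x / q) * a) = qdiff p q m c x * b"
proof -
  have shift: "\<mu> * (qseries q m c (x / q) * a) = q ^ m * qseries q m c (x / q) * ((p - x) * b)"
    using assms(2) by (metis mult.assoc mult.left_commute)
  have "a * (A * B) ^ k * (D * b) - a * (A * C) ^ k * (E * b) = a * A ^ k * (D * B ^ k - E * C ^ k) * b"
    for a A B C D E :: real and k
    by (simp add: power_mult_distrib algebra_simps)
  then show ?thesis
    unfolding shift qseries_rescaled[OF assms(1)] mult.assoc[of "q ^ m"]
    unfolding qseries_def qdiff_def qkernel_def sum_distrib_right sum_subtractf[symmetric]
    by (intro sum.cong refl)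
qed

lemma real_polynomial_function_qdiff: "real_polynomial_function (qdiff p q m c)"
  unfolding qdiff_def qkernel_def by (intro real_polynomial_function_intros)

lemma real_polynomial_function_qdiff_cofactor: "real_polynomial_function (qdiff_cofactor p q m c)"
  unfolding qdiff_cofactor_def qkernel_def by (intro real_polynomial_function_intros)

lemma qdiff_split:
  assumes "2 \<le> m"
  shows "qdiff p q m c x = c 0 * (-x) ^ m * qkernel p q 0 x + c 1 * (-x) ^ (m - 1) * (1 - x) * qkernel p q 1 x
      + (\<Sum>k=2..m. c k * (-x) ^ (m - k) * (1 - x) ^ k * qkernel p q k x)"
  using assms by (simp add: qdiff_def sum.atLeast_Suc_atMost numeral_2_eq_2)

lemma qdiff_at_1:
  assumes "2 \<le> m"
  shows "qdiff p q m c 1 = 2 * (1 - p) * (-1) ^ m * c 0"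
proof -
  have "(\<Sum>k=2..m. c k * (-1) ^ (m - k) * (1 - 1) ^ k * qkernel p q k 1) = (0::real)"
    by (rule sum.neutral) simp
  then show ?thesis
    unfolding qdiff_split[OF assms] by (simp add: qkernel_def)
qed

lemma qdiff_eq_qdiff_cofactor:
  assumes "2 \<le> m" "c 0 = 0"
  shows "qdiff p q m c x = (1 - x)\<^sup>2 * qdiff_cofactor p q m c x"
proof -
  have "qkernel p q (Suc 0) x = (1 - p * q) * (1 - x) * (1 + x)"
    by (simp add: qkernel_def algebra_simps)
  moreover have "(\<Sum>k=2..m. c k * (-x) ^ (m - k) * (1 - x) ^ k * qkernel p q k x)
      = (1 - x)\<^sup>2 * (\<Sum>k=2..m. c k * (-x) ^ (m - k) * (1 - x) ^ (k - 2) * qkernel p q k x)"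
    unfolding sum_distrib_left
  proof (rule sum.cong[OF refl])
    fix k assume "k \<in> {2..m}"
    then have "(1 - x) ^ k = (1 - x)\<^sup>2 * (1 - x) ^ (k - 2)"
      by (metis atLeastAtMost_iff le_add_diff_inverse power_add)
    then show "c k * (-x) ^ (m - k) * (1 - x) ^ k * qkernel p q k x
        = (1 - x)\<^sup>2 * (c k * (-x) ^ (m - k) * (1 - x) ^ (k - 2) * qkernel p q k x)"
      by (simp only: mult_ac)
  qed
  ultimately show ?thesis
    using assms by (simp add: qdiff_split qdiff_cofactor_def distrib_left power2_eq_square mult_ac)
qed

lemma qdiff_cofactor_at_1:
  assumes "2 \<le> m"
  shows "qdiff_cofactor p q m c 1 = 2 * (-1) ^ (m - 2) * (c 2 * (1 - p) * (1 - q)\<^sup>2 - c 1 * (1 - p * q))"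
proof -
  have "(\<Sum>k=3..m. c k * (-1) ^ (m - k) * (1 - 1) ^ (k - 2) * qkernel p q k 1) = (0::real)"
    by (rule sum.neutral) simp
  moreover have "(-1::real) ^ (m - 1) = - ((-1) ^ (m - 2))"
    using assms by (metis Suc_diff_Suc Suc_1 Suc_le_lessD diff_Suc_1 mult_minus1 power_Suc)
  ultimately show ?thesis
    using assms by (simp add: qdiff_cofactor_def qkernel_def sum.atLeast_Suc_atMost numeral_3_eq_3
        power2_eq_square algebra_simps)
qed

lemma qdiff_triple_root_at_1:
  fixes p q :: real and h :: "real \<Rightarrow> real"
  assumes m: "2 \<le> m" and p: "p \<noteq> 1" and h: "real_polynomial_function h"
    and root: "\<And>x. x \<noteq> 1 \<Longrightarrow> qdiff p q m c x = (1 - x) ^ 3 * h x"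
  shows "c 1 * (1 - p * q) = c 2 * (1 - p) * (1 - q)\<^sup>2"
proof -
  have "qdiff p q m c 1 = (1 - 1) ^ 3 * h 1"
    by (rule real_polynomial_function_eq_at[OF real_polynomial_function_qdiff _ root])
      (use h in \<open>intro real_polynomial_function_intros\<close>)
  then have c0: "c 0 = 0"
    using p by (simp add: qdiff_at_1[OF m])
  have cofactor: "qdiff_cofactor p q m c x = (1 - x) * h x" if "x \<noteq> 1" for x
    using root[OF that] qdiff_eq_qdiff_cofactor[where c = c, OF m c0, of p q x] that
    by (simp add: power2_eq_square power3_eq_cube)
  have "qdiff_cofactor p q m c 1 = (1 - 1) * h 1"
    by (rule real_polynomial_function_eq_at[OF real_polynomial_function_qdiff_cofactor _ cofactor])
      (use h in \<open>intro real_polynomial_function_intros\<close>)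
  then show ?thesis
    by (simp add: qdiff_cofactor_at_1[OF m])
qed

(* The P-identity is the case e = 1, p = q and the Q-identity the case e = 0, p = q^(1/2). *)
lemma source_term_factor:
  fixes x q :: real
  assumes "e + 2 \<le> N"
  shows "(1 - x\<^sup>2) / (1 - q\<^sup>2) * ((1 - x) / (1 - q)) ^ N
    = (1 - x) ^ e * ((1 - x) ^ 3 * ((1 + x) * (1 - x) ^ (N - e - 2) / ((1 - q\<^sup>2) * (1 - q) ^ N)))"
proof -
  have "N = e + 2 + (N - e - 2)"
    using assms by simp
  then have "(1 - x) ^ N = (1 - x) ^ e * (1 - x)\<^sup>2 * (1 - x) ^ (N - e - 2)"
    by (metis power_add)
  moreover have "1 - x\<^sup>2 = (1 - x) * (1 + x)"
    by (simp add: power2_eq_square algebra_simps)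
  ultimately show ?thesis
    by (simp add: power_divide power2_eq_square power3_eq_cube mult_ac)
qed

lemma Ssum_qseries_coeff_relation:
  fixes p q :: real and e :: nat
  assumes q: "0 < q" "q < 1" and m: "2 \<le> m" and p: "p \<noteq> 1"
    and scale: "\<And>x. q powr ((real (2 * m + e) + 1) / 2) * ((1 - p * (x / q)) * (1 - x / q) ^ e)
                  = q ^ m * ((p - x) * (1 - x) ^ e)"
    and expansion: "\<And>n. n \<ge> 1 \<Longrightarrow> Ssum (2 * m + e) n q
                  = qseries q m (\<lambda>k. C k / ((1 - q)\<^sup>2) ^ k) (q ^ n) * ((1 - p * q ^ n) * (1 - q ^ n) ^ e)"
  shows "C 1 * (1 - p * q) = C 2 * (1 - p)"
proof -
  define v where "v = (1 - q)\<^sup>2"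
  define c where "c = (\<lambda>k. C k / v ^ k)"
  define R where "R x = qseries q m c x * ((1 - p * x) * (1 - x) ^ e)" for x
  define N where "N = 2 * m + e - 1"
  define h where "h x = (1 + x) * (1 - x) ^ (N - e - 2) / ((1 - q\<^sup>2) * (1 - q) ^ N)" for x
  have "real_polynomial_function R"
    unfolding R_def qseries_def by (intro real_polynomial_function_intros)
  moreover have "Ssum (2 * m + e) n q = R (q ^ n)" if "n \<ge> 1" for n
    using expansion[OF that] by (simp only: R_def c_def v_def)
  ultimately have "R x - q powr ((real (2 * m + e) + 1) / 2) * R (x / q)
      = (1 - x\<^sup>2) / (1 - q\<^sup>2) * ((1 - x) / (1 - q)) ^ N" for x
    unfolding N_def by (rule Ssum_functional_equation[OF q])
  moreover have "R x - q powr ((real (2 * m + e) + 1) / 2) * R (x / q) = qdiff p q m c x * (1 - x) ^ e" for x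
    unfolding R_def using q scale by (intro qseries_difference) auto
  moreover have "e + 2 \<le> N"
    using m by (simp add: N_def)
  ultimately have cancel: "(1 - x) ^ e * qdiff p q m c x = (1 - x) ^ e * ((1 - x) ^ 3 * h x)" for x
    unfolding h_def by (metis source_term_factor mult.commute)
  have "qdiff p q m c x = (1 - x) ^ 3 * h x" if "x \<noteq> 1" for x
    using cancel[of x] that by simp
  moreover have "real_polynomial_function h"
    unfolding h_def by (intro real_polynomial_function_intros)
  ultimately have relation: "c 1 * (1 - p * q) = c 2 * (1 - p) * v"
    unfolding v_def using qdiff_triple_root_at_1[OF m p] by blast
  have "v \<noteq> 0"
    using q by (simp add: v_def)
  then have "C 1 * (1 - p * q) = v * (c 1 * (1 - p * q))"
    by (simp add: c_def)
  also have "\<dots> = v * (c 2 * (1 - p) * v)"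
    by (simp only: relation)
  also have "\<dots> = C 2 * (1 - p)"
    using \<open>v \<noteq> 0\<close> by (simp add: c_def power2_eq_square)
  finally show ?thesis .
qed

definition P_coeff :: "nat \<Rightarrow> (nat \<Rightarrow> int poly) \<Rightarrow> real \<Rightarrow> nat \<Rightarrow> real" where
  "P_coeff m P q k = qfact k q / qfact (m + 1) q * evalp (P (m - k)) q / qint 2 q / (1 - q)\<^sup>2"

definition Q_coeff :: "nat \<Rightarrow> (nat \<Rightarrow> int poly) \<Rightarrow> real \<Rightarrow> nat \<Rightarrow> real" where
  "Q_coeff m Q r k = (1 - r) ^ (m - k) * evalp (Q (m - k)) r
      / (\<Prod>i=0..m - k. 1 - r ^ (2 * (m - i) + 1)) / qint 2 (r\<^sup>2)"

lemma P_family_expansion: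
  assumes "P_family m P" "0 < q" "q < 1" "n \<ge> 1"
  shows "Ssum (2 * m + 1) n q
    = qseries q m (\<lambda>k. P_coeff m P q k / ((1 - q)\<^sup>2) ^ k) (q ^ n) * ((1 - q * q ^ n) * (1 - q ^ n))"
proof -
  have "Ssum (2 * m + 1) n q = (\<Sum>k=0..m. (- (q ^ n)) ^ (m - k) * qfact k q / qfact (m + 1) q
      * evalp (P (m - k)) q * (qint n q * qint (n + 1) q) ^ (k + 1) / qint 2 q)"
    using assms unfolding P_family_def by blast
  also have "\<dots> = qseries q m (\<lambda>k. P_coeff m P q k / ((1 - q)\<^sup>2) ^ k) (q ^ n) * ((1 - q * q ^ n) * (1 - q ^ n))"
    unfolding qseries_def sum_distrib_right qint_mult_qint_Suc[unfolded Suc_eq_plus1]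
    by (rule sum.cong[OF refl]) (simp add: P_coeff_def power_divide power_mult_distrib mult_ac)
  finally show ?thesis .
qed

lemma P_family_eval_eq:
  fixes P :: "nat \<Rightarrow> int poly" and q :: real
  assumes m: "2 \<le> m" and fam: "P_family m P" and q: "0 < q" "q < 1"
  shows "evalp (P (m - 1)) q = evalp (P (m - 2)) q"
proof -
  have "(real (2 * m + 1) + 1) / 2 = real (Suc m)"
    by simp
  then have "q powr ((real (2 * m + 1) + 1) / 2) = q * q ^ m"
    by (simp only: powr_realpow[OF q(1)] power_Suc)
  then have scale: "q powr ((real (2 * m + 1) + 1) / 2) * ((1 - q * (x / q)) * (1 - x / q) ^ 1)
      = q ^ m * ((q - x) * (1 - x) ^ 1)" for x
    using q by (simp add: field_simps)
  have "P_coeff m P q 1 * (1 - q * q) = P_coeff m P q 2 * (1 - q)"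
    using Ssum_qseries_coeff_relation[OF q m _ scale] P_family_expansion[OF fam q] q by simp
  moreover define K where "K = (1 + q) * (1 - q) / (qfact (m + 1) q * qint 2 q * (1 - q)\<^sup>2)"
  moreover have "qfact 1 q = 1" "qfact 2 q = 1 + q" "1 - q * q = (1 + q) * (1 - q)"
    using q by (simp_all add: qfact_def qint_def numeral_2_eq_2 power2_eq_square field_simps)
  ultimately have "K * evalp (P (m - 1)) q = K * evalp (P (m - 2)) q"
    by (simp add: P_coeff_def divide_inverse inverse_mult_distrib mult_ac)
  moreover have "K \<noteq> 0"
    using q qfact_pos[OF q, of "m + 1"] qint_pos[OF q, of 2] by (simp add: K_def)
  ultimately show ?thesis
    by simp
qed

lemma square_powr_half_odd:
  fixes r :: real
  assumes "0 < r"
  shows "(r\<^sup>2) powr (real k + 1 / 2) = r ^ (2 * k + 1)"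
proof -
  have "r\<^sup>2 = r powr 2"
    using assms by simp
  then have "(r\<^sup>2) powr (real k + 1 / 2) = r powr real (2 * k + 1)"
    by (simp add: powr_powr algebra_simps)
  also have "\<dots> = r ^ (2 * k + 1)"
    using assms by (rule powr_realpow)
  finally show ?thesis .
qed

lemma Q_family_expansion:
  fixes r :: real
  assumes "Q_family m Q" "0 < r" "r < 1" "n \<ge> 1"
  shows "Ssum (2 * m) n (r\<^sup>2)
    = qseries (r\<^sup>2) m (\<lambda>k. Q_coeff m Q r k / ((1 - r\<^sup>2)\<^sup>2) ^ k) ((r\<^sup>2) ^ n) * (1 - r * (r\<^sup>2) ^ n)"
proof -
  define q where "q = r\<^sup>2"
  have "0 < q" "q < 1"
    using assms(2,3) by (simp_all add: q_def power_less_one_iff)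
  have "q powr (1 / 2) = r" "q powr (real n + 1 / 2) = r * q ^ n"
    using square_powr_half_odd[OF assms(2), of 0] square_powr_half_odd[OF assms(2), of n]
    by (simp_all add: q_def power_mult)
  moreover have "(\<Prod>i=0..m - k. 1 - q powr (real m - real i + 1 / 2)) = (\<Prod>i=0..m - k. 1 - r ^ (2 * (m - i) + 1))" for k
    using square_powr_half_odd[OF assms(2)] by (intro prod.cong) (simp_all add: q_def flip: of_nat_diff)
  moreover have "Ssum (2 * m) n q = (1 - q powr (real n + 1 / 2)) *
     (\<Sum>k=0..m. (- (q ^ n)) ^ (m - k) * (1 - q powr (1 / 2)) ^ (m - k) * evalp (Q (m - k)) (q powr (1 / 2))
        / (\<Prod>i=0..m - k. (1 - q powr (real m - real i + 1 / 2))) * (qint n q * qint (n + 1) q) ^ k / qint 2 q)"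
    using assms \<open>0 < q\<close> \<open>q < 1\<close> unfolding Q_family_def by blast
  ultimately show ?thesis
    unfolding q_def[symmetric] qseries_def sum_distrib_right qint_mult_qint_Suc[unfolded Suc_eq_plus1]
    by (simp add: Q_coeff_def q_def power_divide power_mult_distrib mult_ac sum_distrib_left)
qed

lemma Q_family_eval_eq:
  fixes Q :: "nat \<Rightarrow> int poly" and r :: real
  assumes m: "2 \<le> m" and fam: "Q_family m Q" and r: "0 < r" "r < 1"
  shows "evalp (Q (m - 1)) r = evalp (Q (m - 2)) r"
proof -
  define q where "q = r\<^sup>2"
  have q: "0 < q" "q < 1"
    using r by (simp_all add: q_def power_less_one_iff)
  have "q powr ((real (2 * m + 0) + 1) / 2) = r * q ^ m"
    using square_powr_half_odd[OF r(1), of m] by (simp add: q_def power_mult add_divide_distrib)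
  then have scale: "q powr ((real (2 * m + 0) + 1) / 2) * ((1 - r * (x / q)) * (1 - x / q) ^ 0)
      = q ^ m * ((r - x) * (1 - x) ^ 0)" for x
    using r by (simp add: q_def field_simps power2_eq_square)
  define C where "C = Q_coeff m Q r"
  have "C 1 * (1 - r * q) = C 2 * (1 - r)"
    using Ssum_qseries_coeff_relation[OF q m _ scale] Q_family_expansion[OF fam r] r
    by (simp add: C_def q_def)
  then have relation: "C 1 * (1 - r ^ 3) = C 2 * (1 - r)"
    by (simp add: q_def power2_eq_square power3_eq_cube mult.assoc)
  define d where "d = (\<Prod>i=0..m - 2. 1 - r ^ (2 * (m - i) + 1))"
  define a where "a = (1 - r) ^ (m - 2)"
  define K where "K = a * (1 - r) / (d * qint 2 q)"
  have "1 - r ^ k \<noteq> 0" if "k > 0" for k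
    using r that by (simp add: power_less_one_iff less_imp_neq)
  then have "d \<noteq> 0" "1 - r ^ 3 \<noteq> 0"
    by (auto simp: d_def simp del: power_Suc)
  moreover have "a \<noteq> 0" "1 - r \<noteq> 0" "qint 2 q \<noteq> 0"
    using r qint_pos[OF q, of 2] by (auto simp: a_def)
  ultimately have "K \<noteq> 0"
    by (simp add: K_def)
  have "m - 1 = Suc (m - 2)" "2 * (m - Suc (m - 2)) + 1 = 3"
    using m by simp_all
  then have "C 1 = a * (1 - r) * evalp (Q (m - 1)) r / (d * (1 - r ^ 3)) / qint 2 q"
    by (simp add: C_def Q_coeff_def q_def a_def d_def prod.atLeast0_atMost_Suc power2_eq_square power3_eq_cube mult_ac)
  with \<open>1 - r ^ 3 \<noteq> 0\<close> have "C 1 * (1 - r ^ 3) = K * evalp (Q (m - 1)) r"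
    by (simp add: K_def)
  moreover have "C 2 * (1 - r) = K * evalp (Q (m - 2)) r"
    by (simp add: C_def Q_coeff_def q_def K_def a_def d_def divide_inverse inverse_mult_distrib mult_ac)
  ultimately show ?thesis
    using relation \<open>K \<noteq> 0\<close> by simp
qed

lemma the_component_eq:
  assumes "\<And>F. fam F \<Longrightarrow> F i = F j"
  shows "(THE p. \<exists>F. fam F \<and> F i = p) = (THE p. \<exists>F. fam F \<and> F j = p)"
proof -
  have "(\<lambda>p. \<exists>F. fam F \<and> F i = p) = (\<lambda>p. \<exists>F. fam F \<and> F j = p)"
    by (rule ext) (use assms in metis)
  then show ?thesis
    by simp
qed

theorem corollary3p4:
  fixes m :: nat
  assumes "m \<ge> 2"
  shows "Ppoly m (m - 1) = Ppoly m (m - 2) \<and> Qpoly m (m - 1) = Qpoly m (m - 2)"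
proof
  have "P (m - 1) = P (m - 2)" if "P_family m P" for P
    by (intro evalp_eqI P_family_eval_eq[OF assms that])
  then show "Ppoly m (m - 1) = Ppoly m (m - 2)"
    unfolding Ppoly_def by (rule the_component_eq)
next
  have "Q (m - 1) = Q (m - 2)" if "Q_family m Q" for Q
    by (intro evalp_eqI Q_family_eval_eq[OF assms that])
  then show "Qpoly m (m - 1) = Qpoly m (m - 2)"
    unfolding Qpoly_def by (rule the_component_eq)
qed

end
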